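(* For all integers $q\ge1$ and $t\ge0$, $\mathsf{INDEL}_{\mathrm{det}}(q,t)\le \mathsf{DEL}_{\mathrm{det}}(q,t)=\mathsf{INS}_{\mathrm{det}}(q,t)=\mathsf{INS}_{\mathrm{cor}}(q,t).$
   Context: Let $[q]=\{0,1,\dots,q-1\}$. For $1\le m\le q$, a partial permutation of length $m$ over $[q]$ is a sequence $\pi=(\pi_1,\dots,\pi_m)$ of $m$ pairwise distinct elements of $[q]$. Let $\mathcal{S}_m^q$ be the set of those of length $m$ and $\mathcal{S}_{\mathrm{all}}^q=\bigcup_{m=1}^{q}\mathcal{S}_m^q$. A code is any subset of $\mathcal{S}_{\mathrm{all}}^q$. Juxtaposition $\omega\pi$ denotes concatenation with $\omega$ on the left. Tail deletions: for $\pi$ of length $m$ and integer $j\ge 0$, $\pi_{\downarrow j}=(\pi_{k+1},\dots,\pi_m)$ with $k=\min(j,m-1)$; $\mathcal{B}_{\mathrm{del}}^t(\pi)=\{\pi_{\downarrow j}:0\le j\le t\}$. Tail insertions: $\mathcal{B}_{\mathrm{ins}}^t(\pi)$ is the set of all $\omega\pi\in\mathcal{S}_{\mathrm{all}}^q$ with $\omega$ a (possibly empty) sequence of at most $t$ elements of $[q]$. Tail indels: $\mathcal{B}_{\mathrm{indel}}^t(\pi)$ is the set of partial permutations obtainable from $\pi$ by at most $t$ operations, each either a single tail deletion (removing the first symbol of a partial permutation of length at least $2$) or a single tail insertion (prepending an element of $[q]$ not already occurring). For $X\in\{\mathrm{del},\mathrm{ins},\mathrm{indel}\}$, a code $\mathcal{C}$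 is $t$-tail-$X$-detecting if $\mathcal{C}\cap\mathcal{B}_X^t(\pi)=\{\pi\}$ for all $\pi\in\mathcal{C}$, and $t$-tail-$X$-correcting if $\mathcal{B}_X^t(\pi_1)\cap\mathcal{B}_X^t(\pi_2)=\emptyset$ for all distinct $\pi_1,\pi_2\in\mathcal{C}$. $\mathsf{DEL}_{\mathrm{det}}(q,t)$, $\mathsf{INS}_{\mathrm{det}}(q,t)$, $\mathsf{INDEL}_{\mathrm{det}}(q,t)$ denote the maximum sizes of $t$-tail-deletion-, insertion-, indel-detecting codes in $\mathcal{S}_{\mathrm{all}}^q$, and $\mathsf{INS}_{\mathrm{cor}}(q,t)$ the maximum size of a $t$-tail-insertion-correcting code. *)

theory Defs
  imports Main
begin

text \<open>Partial permutations over [q] = {0..q-1}: nonempty lists of pairwise distinct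
  elements of {..<q} (length at most q is automatic from distinctness).
  Index 1 of the paper corresponds to the head of the list; "tail" operations
  act on the left end.\<close>

definition S_all :: "nat \<Rightarrow> nat list set" where
  "S_all q = {p. distinct p \<and> set p \<subseteq> {..<q} \<and> 1 \<le> length p}"

definition tail_del :: "nat list \<Rightarrow> nat \<Rightarrow> nat list" where
  "tail_del p j = drop (min j (length p - 1)) p"

definition B_del :: "nat \<Rightarrow> nat list \<Rightarrow> nat list set" where
  "B_del t p = {tail_del p j | j. j \<le> t}"

definition B_ins :: "nat \<Rightarrow> nat \<Rightarrow> nat list \<Rightarrow> nat list set" where
  "B_ins q t p = {w @ p | w. length w \<le> t \<and> set w \<subseteq> {..<q} \<and> w @ p \<in> S_all q}"

definition indel_step :: "nat \<Rightarrow> nat list \<Rightarrow> nat list \<Rightarrow> bool" where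
  "indel_step q s s' \<longleftrightarrow>
     (2 \<le> length s \<and> s' = tl s) \<or> (\<exists>a<q. a \<notin> set s \<and> s' = a # s)"

definition B_indel :: "nat \<Rightarrow> nat \<Rightarrow> nat list \<Rightarrow> nat list set" where
  "B_indel q t p = {s. \<exists>k\<le>t. (indel_step q ^^ k) p s}"

definition detecting :: "(nat list \<Rightarrow> nat list set) \<Rightarrow> nat list set \<Rightarrow> bool" where
  "detecting B C \<longleftrightarrow> (\<forall>p\<in>C. C \<inter> B p = {p})"

definition correcting :: "(nat list \<Rightarrow> nat list set) \<Rightarrow> nat list set \<Rightarrow> bool" where
  "correcting B C \<longleftrightarrow> (\<forall>p1\<in>C. \<forall>p2\<in>C. p1 \<noteq> p2 \<longrightarrow> B p1 \<inter> B p2 = {})"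

definition max_code :: "nat \<Rightarrow> (nat list set \<Rightarrow> bool) \<Rightarrow> nat" where
  "max_code q P = Max (card ` {C. C \<subseteq> S_all q \<and> P C})"

definition DEL_det :: "nat \<Rightarrow> nat \<Rightarrow> nat" where
  "DEL_det q t = max_code q (detecting (B_del t))"

definition INS_det :: "nat \<Rightarrow> nat \<Rightarrow> nat" where
  "INS_det q t = max_code q (detecting (B_ins q t))"

definition INDEL_det :: "nat \<Rightarrow> nat \<Rightarrow> nat" where
  "INDEL_det q t = max_code q (detecting (B_indel q t))"

definition INS_cor :: "nat \<Rightarrow> nat \<Rightarrow> nat" where
  "INS_cor q t = max_code q (correcting (B_ins q t))"

end

theory Submission
  imports Defs
begin

text \<open>A word lies in the t-tail-deletion ball of a partial permutation p exactly when p arises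
  from it by prepending at most t symbols, and in the t-tail-insertion ball of p exactly when it
  arises from p in this way. So deletion-detecting, insertion-detecting and insertion-correcting
  codes are one and the same class: the codes in which no codeword is obtained from another by
  prepending between 1 and t symbols. For correcting codes this uses that if w1 p1 = w2 p2 then
  the shorter of w1, w2 splits off, exhibiting one of p1, p2 as a short extension of the other.
  Finally, tail deletions are tail indels, so indel-detecting codes are deletion-detecting.\<close>

definition suffix_free :: "nat \<Rightarrow> 'a list set \<Rightarrow> bool" where
  "suffix_free t C \<longleftrightarrow> (\<forall>p\<in>C. \<forall>w. w @ p \<in> C \<and> length w \<le> t \<longrightarrow> w = [])"

lemma finite_S_all: "finite (S_all q)"
proof (rule finite_subset)
  show "S_all q \<subseteq> {xs. set xs \<subseteq> {..<q} \<and> length xs \<le> q}"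
  proof
    fix p assume "p \<in> S_all q"
    then have "distinct p" and p_range: "set p \<subseteq> {..<q}" unfolding S_all_def by auto
    then have "length p \<le> card {..<q}"
      by (metis card_mono distinct_card finite_lessThan)
    with p_range show "p \<in> {xs. set xs \<subseteq> {..<q} \<and> length xs \<le> q}" by simp
  qed
  show "finite {xs. set xs \<subseteq> {..<q} \<and> length xs \<le> q}"
    by (rule finite_lists_length_le) simp
qed

lemma max_code_mono:
  assumes "\<And>C. C \<subseteq> S_all q \<Longrightarrow> P C \<Longrightarrow> P' C" and "P {}"
  shows "max_code q P \<le> max_code q P'"
  unfolding max_code_def
proof (rule Max_mono)
  show "card ` {C. C \<subseteq> S_all q \<and> P C} \<subseteq> card ` {C. C \<subseteq> S_all q \<and> P' C}"
    using assms(1) by blast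
  show "card ` {C. C \<subseteq> S_all q \<and> P C} \<noteq> {}" using assms(2) by blast
  have "{C. C \<subseteq> S_all q \<and> P' C} \<subseteq> Pow (S_all q)" by blast
  then show "finite (card ` {C. C \<subseteq> S_all q \<and> P' C})"
    using finite_S_all by (meson finite_Pow_iff finite_subset finite_imageI)
qed

lemma max_code_cong:
  assumes "\<And>C. C \<subseteq> S_all q \<Longrightarrow> P C \<longleftrightarrow> P' C"
  shows "max_code q P = max_code q P'"
proof -
  have "{C. C \<subseteq> S_all q \<and> P C} = {C. C \<subseteq> S_all q \<and> P' C}"
    using assms by blast
  then show ?thesis unfolding max_code_def by simp
qed

lemma detecting_iff:
  assumes "\<And>p. p \<in> C \<Longrightarrow> p \<in> B p"
  shows "detecting B C \<longleftrightarrow> (\<forall>p\<in>C. \<forall>p'\<in>C. p' \<in> B p \<longrightarrow> p' = p)"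
  unfolding detecting_def using assms by blast

lemma detecting_antimono:
  assumes "\<And>p. p \<in> C \<Longrightarrow> p \<in> B p" and "\<And>p. B p \<subseteq> B' p" and "detecting B' C"
  shows "detecting B C"
  using assms unfolding detecting_def by blast

lemma mem_B_del_iff:
  assumes "p \<noteq> []"
  shows "x \<in> B_del t p \<longleftrightarrow> x \<noteq> [] \<and> (\<exists>w. p = w @ x \<and> length w \<le> t)"
proof
  assume "x \<in> B_del t p"
  then obtain j where "j \<le> t" and x: "x = drop (min j (length p - 1)) p"
    unfolding B_del_def tail_del_def by auto
  define k where "k = min j (length p - 1)"
  have "k < length p" "k \<le> t" using assms \<open>j \<le> t\<close> unfolding k_def by (cases p, auto)+
  moreover have "p = take k p @ x" using x unfolding k_def by simp
  ultimately show "x \<noteq> [] \<and> (\<exists>w. p = w @ x \<and> length w \<le> t)"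
    using x unfolding k_def[symmetric] by (auto intro!: exI[of _ "take k p"])
next
  assume "x \<noteq> [] \<and> (\<exists>w. p = w @ x \<and> length w \<le> t)"
  then obtain w where "x \<noteq> []" "p = w @ x" "length w \<le> t" by blast
  then have "x = tail_del p (length w)" unfolding tail_del_def by (cases x) auto
  with \<open>length w \<le> t\<close> show "x \<in> B_del t p" unfolding B_del_def by blast
qed

lemma self_mem_B_del: "p \<in> B_del t p"
  unfolding B_del_def tail_del_def by (auto intro!: exI[of _ 0])

lemma mem_B_ins_iff: "x \<in> B_ins q t p \<longleftrightarrow> x \<in> S_all q \<and> (\<exists>w. x = w @ p \<and> length w \<le> t)"
  unfolding B_ins_def S_all_def by auto

lemma suffix_free_iff:
  "suffix_free t C \<longleftrightarrow> (\<forall>p\<in>C. \<forall>p'\<in>C. (\<exists>w. p' = w @ p \<and> length w \<le> t) \<longrightarrow> p' = p)"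
  unfolding suffix_free_def
proof (intro iffI ballI allI impI)
  fix p p' assume "\<forall>p\<in>C. \<forall>w. w @ p \<in> C \<and> length w \<le> t \<longrightarrow> w = []"
    and "p \<in> C" "p' \<in> C" "\<exists>w. p' = w @ p \<and> length w \<le> t"
  then show "p' = p" by blast
next
  fix p w assume "\<forall>p\<in>C. \<forall>p'\<in>C. (\<exists>w. p' = w @ p \<and> length w \<le> t) \<longrightarrow> p' = p"
    and "p \<in> C" "w @ p \<in> C \<and> length w \<le> t"
  then have "w @ p = p" by blast
  then show "w = []" by simp
qed

lemma detecting_B_del_iff:
  assumes "[] \<notin> C"
  shows "detecting (B_del t) C \<longleftrightarrow> suffix_free t C"
proof -
  have B_del_C: "p' \<in> B_del t p \<longleftrightarrow> (\<exists>w. p = w @ p' \<and> length w \<le> t)"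
    if "p \<in> C" "p' \<in> C" for p p'
  proof -
    have "p \<noteq> []" "p' \<noteq> []" using that assms by auto
    then show ?thesis by (simp add: mem_B_del_iff)
  qed
  have "detecting (B_del t) C \<longleftrightarrow> (\<forall>p\<in>C. \<forall>p'\<in>C. p' \<in> B_del t p \<longrightarrow> p' = p)"
    by (rule detecting_iff[OF self_mem_B_del])
  also have "\<dots> \<longleftrightarrow> (\<forall>p\<in>C. \<forall>p'\<in>C. (\<exists>w. p' = w @ p \<and> length w \<le> t) \<longrightarrow> p' = p)"
    using B_del_C by blast
  finally show ?thesis by (simp add: suffix_free_iff)
qed

lemma self_mem_B_ins: "p \<in> S_all q \<Longrightarrow> p \<in> B_ins q t p"
  by (auto simp: mem_B_ins_iff intro!: exI[of _ "[]"])

lemma detecting_B_ins_iff: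
  assumes "C \<subseteq> S_all q"
  shows "detecting (B_ins q t) C \<longleftrightarrow> suffix_free t C"
proof -
  have "detecting (B_ins q t) C \<longleftrightarrow> (\<forall>p\<in>C. \<forall>p'\<in>C. p' \<in> B_ins q t p \<longrightarrow> p' = p)"
    using assms self_mem_B_ins by (intro detecting_iff) blast
  then show ?thesis
    using assms by (auto simp: mem_B_ins_iff suffix_free_iff)
qed

lemma correcting_B_ins_iff:
  assumes "C \<subseteq> S_all q"
  shows "correcting (B_ins q t) C \<longleftrightarrow> suffix_free t C"
proof
  assume correct: "correcting (B_ins q t) C"
  show "suffix_free t C" unfolding suffix_free_iff
  proof (intro ballI impI)
    fix p p' assume "p \<in> C" "p' \<in> C" "\<exists>w. p' = w @ p \<and> length w \<le> t"
    then have "p' \<in> B_ins q t p \<inter> B_ins q t p'"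
      using assms self_mem_B_ins by (auto simp: mem_B_ins_iff)
    with correct \<open>p \<in> C\<close> \<open>p' \<in> C\<close> show "p' = p"
      unfolding correcting_def by blast
  qed
next
  assume free: "suffix_free t C"
  show "correcting (B_ins q t) C" unfolding correcting_def
  proof (intro ballI impI)
    fix p1 p2 assume "p1 \<in> C" "p2 \<in> C" "p1 \<noteq> p2"
    show "B_ins q t p1 \<inter> B_ins q t p2 = {}"
    proof (rule ccontr)
      assume "B_ins q t p1 \<inter> B_ins q t p2 \<noteq> {}"
      then obtain w1 w2 where "w1 @ p1 = w2 @ p2" "length w1 \<le> t" "length w2 \<le> t"
        unfolding B_ins_def by auto
      then have "(\<exists>u. p2 = u @ p1 \<and> length u \<le> t) \<or> (\<exists>u. p1 = u @ p2 \<and> length u \<le> t)"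
        by (auto simp: append_eq_append_conv2)
      with free \<open>p1 \<in> C\<close> \<open>p2 \<in> C\<close> \<open>p1 \<noteq> p2\<close> show False
        unfolding suffix_free_iff by blast
    qed
  qed
qed

lemma indel_step_pow_drop:
  assumes "i < length p"
  shows "(indel_step q ^^ i) p (drop i p)"
  using assms
proof (induction i)
  case 0
  then show ?case by simp
next
  case (Suc i)
  have "indel_step q (drop i p) (drop (Suc i) p)"
    using Suc.prems unfolding indel_step_def by (intro disjI1) (simp add: drop_Suc drop_tl)
  with Suc show ?case by auto
qed

lemma B_del_subset_B_indel: "B_del t p \<subseteq> B_indel q t p"
proof
  fix x assume "x \<in> B_del t p"
  then obtain j where "j \<le> t" "x = drop (min j (length p - 1)) p"
    unfolding B_del_def tail_del_def by auto
  then show "x \<in> B_indel q t p"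
    unfolding B_indel_def
    by (cases "p = []")
      (auto intro!: exI[of _ "min j (length p - 1)"] indel_step_pow_drop simp: min_less_iff_disj)
qed

theorem mainTheorem3:
  fixes q t :: nat
  assumes "1 \<le> q"
  shows "INDEL_det q t \<le> DEL_det q t \<and> DEL_det q t = INS_det q t \<and> INS_det q t = INS_cor q t"
proof -
  have nonempty: "[] \<notin> C" if "C \<subseteq> S_all q" for C
    using that unfolding S_all_def by auto
  have "INDEL_det q t \<le> DEL_det q t"
    unfolding INDEL_det_def DEL_det_def
  proof (rule max_code_mono)
    fix C assume "C \<subseteq> S_all q" and "detecting (B_indel q t) C"
    then show "detecting (B_del t) C"
      by (intro detecting_antimono[OF self_mem_B_del B_del_subset_B_indel])
  qed (simp add: detecting_def)
  moreover have "DEL_det q t = INS_det q t"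
    unfolding DEL_det_def INS_det_def
    by (rule max_code_cong) (simp add: nonempty detecting_B_del_iff detecting_B_ins_iff)
  moreover have "INS_det q t = INS_cor q t"
    unfolding INS_det_def INS_cor_def
    by (rule max_code_cong) (simp add: detecting_B_ins_iff correcting_B_ins_iff)
  ultimately show ?thesis by blast
qed

end
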